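(* Let $d\ge 2$, $s\ge1$ and $(\alpha,\beta) \in \mathsf{Brac}_{d,s}$. Then for every $i \in [d]$ with $\beta_i \geq 1-1/s$, $$\sqrt{\alpha_i}\sqrt{s \beta_i - (s-1)} \leq s \sum_{j\in[d],\,j \neq i} \sqrt{\alpha_j \beta_j}.$$
   Context: $[d]=\{1,\dots,d\}$, $\Delta_d=\{\alpha\in\mathbb R^d:\alpha_i\ge0,\ \sum_i\alpha_i=1\}$. For $s\ge1$, $\mathsf{Brac}_{d,s}$ is the set of $(\alpha,\beta)\in\Delta_d^2$ for which there exist $A_1,\dots,A_d,B_1,\dots,B_d\in M_s(\mathbb C)$ with $\sum_i A_iA_i^*=\sum_iB_iB_i^*=I_s$, $\sum_iA_iB_i^*=0$, and $\tfrac1s\|A_i\|_F^2=\alpha_i$, $\tfrac1s\|B_i\|_F^2=\beta_i$ for all $i$, where $\|X\|_F=\operatorname{Tr}(XX^* )^{1/2}$. *)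

theory Defs
  imports Complex_Main
begin

text \<open>Matrices in M_s(C) are represented as functions nat => nat => complex,
  only entries with indices < s being relevant; a d-tuple of matrices
  A_1..A_d is a function A :: nat => nat => nat => complex with matrix index i < d
  (0-based, so [d] = {0..<d}).\<close>

definition simplex :: "nat \<Rightarrow> (nat \<Rightarrow> real) \<Rightarrow> bool" where
  "simplex d a \<longleftrightarrow> (\<forall>i<d. a i \<ge> 0) \<and> (\<Sum>i<d. a i) = 1"

definition mat_sum_prod_adj ::
  "nat \<Rightarrow> nat \<Rightarrow> (nat \<Rightarrow> nat \<Rightarrow> nat \<Rightarrow> complex) \<Rightarrow> (nat \<Rightarrow> nat \<Rightarrow> nat \<Rightarrow> complex)
   \<Rightarrow> nat \<Rightarrow> nat \<Rightarrow> complex" where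
  "mat_sum_prod_adj d s A B a b = (\<Sum>i<d. \<Sum>k<s. A i a k * cnj (B i b k))"

definition frob_sq :: "nat \<Rightarrow> (nat \<Rightarrow> nat \<Rightarrow> complex) \<Rightarrow> real" where
  "frob_sq s M = (\<Sum>a<s. \<Sum>k<s. (cmod (M a k))^2)"

definition Brac :: "nat \<Rightarrow> nat \<Rightarrow> ((nat \<Rightarrow> real) \<times> (nat \<Rightarrow> real)) set" where
  "Brac d s = {(\<alpha>, \<beta>). simplex d \<alpha> \<and> simplex d \<beta> \<and>
     (\<exists>A B :: nat \<Rightarrow> nat \<Rightarrow> nat \<Rightarrow> complex.
        (\<forall>a<s. \<forall>b<s. mat_sum_prod_adj d s A A a b = (if a = b then 1 else 0)) \<and>
        (\<forall>a<s. \<forall>b<s. mat_sum_prod_adj d s B B a b = (if a = b then 1 else 0)) \<and>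
        (\<forall>a<s. \<forall>b<s. mat_sum_prod_adj d s A B a b = 0) \<and>
        (\<forall>i<d. frob_sq s (A i) / real s = \<alpha> i \<and> frob_sq s (B i) / real s = \<beta> i))}"

end

theory Submission
  imports Defs "HOL-Analysis.L2_Norm" "HOL-Analysis.Convex"
begin

text \<open>Put P j = A j B j^*. Since the P j sum to 0, the triangle inequality and
  submultiplicativity of the Frobenius norm give
  |P i|_F \<le> (\<Sum>j \<noteq> i. |A j|_F |B j|_F) = s (\<Sum>j \<noteq> i. sqrt (\<alpha> j \<beta> j)).
  For the lower bound, \<Sum>j. B j B j^* = I makes B = B i a contraction, so D = I - B^* B satisfies
  \<langle>x, D x\<rangle> = |x|^2 - |B x|^2 \<ge> |D x|^2; summing over a basis gives |D|_F^2 \<le> s - |B|_F^2 = t.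
  Cauchy-Schwarz then yields \<langle>x, D x\<rangle> \<le> sqrt t |x|^2, i.e. |B x|^2 \<ge> (1 - sqrt t) |x|^2, which is
  at least (1 - t) / s |x|^2 when s \<ge> 2 (for s = 1, B is a scalar). Applying this to the conjugated rows of A i gives
  |P i|_F^2 \<ge> (1 - t) / s |A i|_F^2 = \<alpha> i (s \<beta> i - (s - 1)).\<close>

definition norm_sq :: "nat \<Rightarrow> (nat \<Rightarrow> complex) \<Rightarrow> real" where
  "norm_sq s x = (\<Sum>k<s. (cmod (x k))\<^sup>2)"

definition cinner :: "nat \<Rightarrow> (nat \<Rightarrow> complex) \<Rightarrow> (nat \<Rightarrow> complex) \<Rightarrow> complex" where
  "cinner s x y = (\<Sum>k<s. cnj (x k) * y k)"

definition mat_vec :: "nat \<Rightarrow> (nat \<Rightarrow> nat \<Rightarrow> complex) \<Rightarrow> (nat \<Rightarrow> complex) \<Rightarrow> nat \<Rightarrow> complex" where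
  "mat_vec s M x = (\<lambda>a. \<Sum>k<s. M a k * x k)"

definition mat_mult ::
  "nat \<Rightarrow> (nat \<Rightarrow> nat \<Rightarrow> complex) \<Rightarrow> (nat \<Rightarrow> nat \<Rightarrow> complex) \<Rightarrow> nat \<Rightarrow> nat \<Rightarrow> complex" where
  "mat_mult s M N = (\<lambda>a b. \<Sum>k<s. M a k * N k b)"

definition mat_adj :: "(nat \<Rightarrow> nat \<Rightarrow> complex) \<Rightarrow> nat \<Rightarrow> nat \<Rightarrow> complex" where
  "mat_adj M = (\<lambda>a b. cnj (M b a))"

definition unit_vec :: "nat \<Rightarrow> nat \<Rightarrow> complex" where
  "unit_vec a = (\<lambda>k. if k = a then 1 else 0)"

lemma cmod_sum_mult_squared_le:
  fixes f g :: "'a \<Rightarrow> complex"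
  shows "(cmod (\<Sum>k\<in>K. f k * g k))\<^sup>2 \<le> (\<Sum>k\<in>K. (cmod (f k))\<^sup>2) * (\<Sum>k\<in>K. (cmod (g k))\<^sup>2)"
proof -
  have "cmod (\<Sum>k\<in>K. f k * g k) \<le> (\<Sum>k\<in>K. cmod (f k) * cmod (g k))"
    by (metis (no_types, lifting) norm_mult norm_sum sum.cong)
  then have "(cmod (\<Sum>k\<in>K. f k * g k))\<^sup>2 \<le> (\<Sum>k\<in>K. cmod (f k) * cmod (g k))\<^sup>2"
    by (simp add: power_mono)
  also have "\<dots> \<le> (\<Sum>k\<in>K. (cmod (f k))\<^sup>2) * (\<Sum>k\<in>K. (cmod (g k))\<^sup>2)"
    by (rule Cauchy_Schwarz_ineq_sum)
  finally show ?thesis .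
qed

lemma norm_sq_nonneg: "0 \<le> norm_sq s x"
  by (simp add: norm_sq_def sum_nonneg)

lemma norm_sq_cong: "(\<And>k. k < s \<Longrightarrow> x k = y k) \<Longrightarrow> norm_sq s x = norm_sq s y"
  by (simp add: norm_sq_def)

lemma norm_sq_cnj [simp]: "norm_sq s (\<lambda>k. cnj (x k)) = norm_sq s x"
  by (simp add: norm_sq_def)

lemma of_real_norm_sq: "complex_of_real (norm_sq s x) = cinner s x x"
  unfolding norm_sq_def cinner_def of_real_sum complex_norm_square by (simp add: mult.commute)

lemma cmod_cinner_squared_le: "(cmod (cinner s x y))\<^sup>2 \<le> norm_sq s x * norm_sq s y"
  using cmod_sum_mult_squared_le[of "\<lambda>k. cnj (x k)" y "{..<s}"]
  by (simp add: cinner_def norm_sq_def)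

lemma cinner_mat_vec_adj: "cinner s x (mat_vec s (mat_adj M) y) = cinner s (mat_vec s M x) y"
  unfolding cinner_def mat_vec_def mat_adj_def
  by (simp add: sum_distrib_left sum_distrib_right mult_ac) (rule sum.swap)

lemma mat_vec_mat_mult: "mat_vec s (mat_mult s M N) x = mat_vec s M (mat_vec s N x)"
  unfolding mat_vec_def mat_mult_def
  by (rule ext) (simp add: sum_distrib_left sum_distrib_right mult_ac, rule sum.swap)

lemma mat_vec_unit_vec: "k < s \<Longrightarrow> mat_vec s M (unit_vec k) = (\<lambda>a. M a k)"
  by (simp add: mat_vec_def unit_vec_def if_distrib cong: if_cong)

lemma norm_sq_unit_vec: "k < s \<Longrightarrow> norm_sq s (unit_vec k) = 1"
  by (simp add: norm_sq_def unit_vec_def if_distrib[of "\<lambda>z. (cmod z)\<^sup>2"] cong: if_cong)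

lemma frob_sq_cong:
  "(\<And>a b. a < s \<Longrightarrow> b < s \<Longrightarrow> M a b = N a b) \<Longrightarrow> frob_sq s M = frob_sq s N"
  by (simp add: frob_sq_def)

lemma frob_sq_uminus [simp]: "frob_sq s (\<lambda>a b. - M a b) = frob_sq s M"
  by (simp add: frob_sq_def)

lemma frob_sq_mat_adj [simp]: "frob_sq s (mat_adj M) = frob_sq s M"
  unfolding frob_sq_def mat_adj_def by simp (rule sum.swap)

lemma frob_sq_eq_sum_rows: "frob_sq s M = (\<Sum>a<s. norm_sq s (M a))"
  by (simp add: frob_sq_def norm_sq_def)

lemma frob_sq_nonneg: "0 \<le> frob_sq s M"
  by (simp add: frob_sq_eq_sum_rows sum_nonneg norm_sq_nonneg)

lemma frob_sq_eq_sum_columns: "frob_sq s M = (\<Sum>k<s. norm_sq s (mat_vec s M (unit_vec k)))"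
  unfolding frob_sq_def norm_sq_def
  by (simp add: mat_vec_unit_vec) (rule sum.swap)

lemma norm_sq_mat_vec_le: "norm_sq s (mat_vec s M x) \<le> frob_sq s M * norm_sq s x"
proof -
  have "norm_sq s (mat_vec s M x) \<le> (\<Sum>a<s. norm_sq s (M a) * norm_sq s x)"
    unfolding norm_sq_def mat_vec_def by (intro sum_mono cmod_sum_mult_squared_le)
  then show ?thesis
    by (simp add: frob_sq_eq_sum_rows sum_distrib_right)
qed

lemma frob_sq_mat_mult_le: "frob_sq s (mat_mult s M N) \<le> frob_sq s M * frob_sq s N"
proof -
  have "frob_sq s (mat_mult s M N) = (\<Sum>b<s. norm_sq s (mat_vec s M (\<lambda>k. N k b)))"
    unfolding frob_sq_def norm_sq_def mat_vec_def mat_mult_def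
    by (rule sum.swap)
  also have "\<dots> \<le> (\<Sum>b<s. frob_sq s M * norm_sq s (\<lambda>k. N k b))"
    by (intro sum_mono norm_sq_mat_vec_le)
  also have "\<dots> = frob_sq s M * frob_sq s N"
    by (simp add: frob_sq_eq_sum_columns[of s N] mat_vec_unit_vec sum_distrib_left)
  finally show ?thesis .
qed

lemma L2_set_sum_le:
  assumes "finite J"
  shows "L2_set (\<lambda>x. \<Sum>j\<in>J. f j x) A \<le> (\<Sum>j\<in>J. L2_set (f j) A)"
  using assms
proof (induction J rule: finite_induct)
  case (insert j J)
  have "L2_set (\<lambda>x. \<Sum>j\<in>insert j J. f j x) A = L2_set (\<lambda>x. f j x + (\<Sum>j\<in>J. f j x)) A"
    using insert by simp
  also have "\<dots> \<le> L2_set (f j) A + L2_set (\<lambda>x. \<Sum>j\<in>J. f j x) A"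
    by (rule L2_set_triangle_ineq)
  also have "\<dots> \<le> L2_set (f j) A + (\<Sum>j\<in>J. L2_set (f j) A)"
    using insert by simp
  finally show ?case
    using insert by simp
qed (simp add: L2_set_def)

lemma sqrt_frob_sq_eq_L2_set:
  "sqrt (frob_sq s M) = L2_set (\<lambda>(a, b). cmod (M a b)) ({..<s} \<times> {..<s})"
  by (simp add: L2_set_def frob_sq_def sum.cartesian_product case_prod_beta)

lemma sqrt_frob_sq_sum_le:
  assumes "finite J"
  shows "sqrt (frob_sq s (\<lambda>a b. \<Sum>j\<in>J. M j a b)) \<le> (\<Sum>j\<in>J. sqrt (frob_sq s (M j)))"
proof -
  have "L2_set (\<lambda>(a, b). cmod (\<Sum>j\<in>J. M j a b)) ({..<s} \<times> {..<s})
      \<le> L2_set (\<lambda>p. \<Sum>j\<in>J. (\<lambda>(a, b). cmod (M j a b)) p) ({..<s} \<times> {..<s})"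
    by (rule L2_set_mono) (auto intro: norm_sum)
  also have "\<dots> \<le> (\<Sum>j\<in>J. L2_set (\<lambda>(a, b). cmod (M j a b)) ({..<s} \<times> {..<s}))"
    using assms by (rule L2_set_sum_le)
  finally show ?thesis
    by (simp only: sqrt_frob_sq_eq_L2_set)
qed

definition gram_defect :: "nat \<Rightarrow> (nat \<Rightarrow> nat \<Rightarrow> complex) \<Rightarrow> nat \<Rightarrow> nat \<Rightarrow> complex" where
  "gram_defect s B = (\<lambda>a b. (if a = b then 1 else 0) - mat_mult s (mat_adj B) B a b)"

lemma mat_vec_gram_defect:
  assumes "a < s"
  shows "mat_vec s (gram_defect s B) x a = x a - mat_vec s (mat_adj B) (mat_vec s B x) a"
proof -
  have "(\<Sum>k<s. (if a = k then 1 else 0) * x k) = x a"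
    using assms by (simp add: if_distrib[of "\<lambda>c. c * _"] cong: if_cong)
  then show ?thesis
    by (simp add: gram_defect_def mat_vec_def left_diff_distrib sum_subtractf
        mat_vec_mat_mult[unfolded mat_vec_def, symmetric])
qed

lemma of_real_norm_sq_diff:
  "complex_of_real (norm_sq s (\<lambda>k. u k - w k))
     = norm_sq s u - cinner s u w - cnj (cinner s u w) + norm_sq s w"
  by (simp add: of_real_norm_sq cinner_def algebra_simps sum_subtractf sum.distrib)

lemma cinner_gram_defect:
  "cinner s x (mat_vec s (gram_defect s B) x) = norm_sq s x - norm_sq s (mat_vec s B x)"
proof -
  have "cinner s x (mat_vec s (gram_defect s B) x)
      = cinner s x x - cinner s x (mat_vec s (mat_adj B) (mat_vec s B x))"
    by (simp add: cinner_def mat_vec_gram_defect right_diff_distrib sum_subtractf)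
  then show ?thesis
    by (simp add: cinner_mat_vec_adj of_real_norm_sq)
qed

lemma norm_sq_gram_defect_le:
  assumes adj_contraction: "\<And>y. norm_sq s (mat_vec s (mat_adj B) y) \<le> norm_sq s y"
  shows "norm_sq s (mat_vec s (gram_defect s B) x) \<le> norm_sq s x - norm_sq s (mat_vec s B x)"
proof -
  let ?Bx = "mat_vec s B x"
  have "cinner s x (mat_vec s (mat_adj B) ?Bx) = norm_sq s ?Bx"
    by (simp add: cinner_mat_vec_adj of_real_norm_sq)
  then have "complex_of_real (norm_sq s (mat_vec s (gram_defect s B) x))
      = complex_of_real (norm_sq s x - 2 * norm_sq s ?Bx + norm_sq s (mat_vec s (mat_adj B) ?Bx))"
    by (simp add: norm_sq_cong[OF mat_vec_gram_defect] of_real_norm_sq_diff)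
  then show ?thesis
    using adj_contraction[of ?Bx] by (simp only: of_real_eq_iff)
qed

lemma frob_sq_gram_defect_le:
  assumes adj_contraction: "\<And>y. norm_sq s (mat_vec s (mat_adj B) y) \<le> norm_sq s y"
  shows "frob_sq s (gram_defect s B) \<le> real s - frob_sq s B"
proof -
  have "frob_sq s (gram_defect s B) \<le> (\<Sum>k<s. 1 - norm_sq s (mat_vec s B (unit_vec k)))"
    unfolding frob_sq_eq_sum_columns[of s "gram_defect s B"]
    by (intro sum_mono) (metis norm_sq_gram_defect_le[OF adj_contraction] norm_sq_unit_vec lessThan_iff)
  also have "\<dots> = real s - frob_sq s B"
    by (simp add: sum_subtractf frob_sq_eq_sum_columns[of s B])
  finally show ?thesis .
qed

lemma norm_sq_mat_vec_ge_sqrt: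
  assumes adj_contraction: "\<And>y. norm_sq s (mat_vec s (mat_adj B) y) \<le> norm_sq s y"
  shows "(1 - sqrt (real s - frob_sq s B)) * norm_sq s x \<le> norm_sq s (mat_vec s B x)"
proof -
  define t where "t = real s - frob_sq s B"
  define n where "n = norm_sq s x"
  define q where "q = n - norm_sq s (mat_vec s B x)"
  let ?Dx = "mat_vec s (gram_defect s B) x"
  have n_nonneg: "0 \<le> n"
    by (simp add: n_def norm_sq_nonneg)
  have frob_defect: "frob_sq s (gram_defect s B) \<le> t"
    unfolding t_def using adj_contraction by (rule frob_sq_gram_defect_le)
  then have t_nonneg: "0 \<le> t"
    using frob_sq_nonneg[of s "gram_defect s B"] by linarith
  have "q\<^sup>2 = (cmod (cinner s x ?Dx))\<^sup>2"
    by (simp add: cinner_gram_defect q_def n_def del: of_real_diff)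
  also have "\<dots> \<le> n * norm_sq s ?Dx"
    unfolding n_def by (rule cmod_cinner_squared_le)
  also have "\<dots> \<le> n * (t * n)"
  proof (rule mult_left_mono[OF _ n_nonneg])
    have "norm_sq s ?Dx \<le> frob_sq s (gram_defect s B) * n"
      unfolding n_def by (rule norm_sq_mat_vec_le)
    also have "\<dots> \<le> t * n"
      using frob_defect n_nonneg by (rule mult_right_mono)
    finally show "norm_sq s ?Dx \<le> t * n" .
  qed
  also have "\<dots> = (sqrt t * n)\<^sup>2"
    using t_nonneg by (simp add: power2_eq_square)
  finally have "q \<le> sqrt t * n"
    by (rule power2_le_imp_le) (simp add: t_nonneg n_nonneg)
  then have "(1 - sqrt t) * n \<le> norm_sq s (mat_vec s B x)"
    unfolding q_def by (simp add: left_diff_distrib)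
  then show ?thesis
    by (simp only: t_def n_def)
qed

lemma norm_sq_mat_vec_ge:
  assumes "s \<ge> 1"
    and adj_contraction: "\<And>y. norm_sq s (mat_vec s (mat_adj B) y) \<le> norm_sq s y"
    and frob_large: "real s - frob_sq s B \<le> 1"
  shows "(1 - (real s - frob_sq s B)) / real s * norm_sq s x \<le> norm_sq s (mat_vec s B x)"
proof (cases "s = 1")
  case True
  then show ?thesis
    by (simp add: norm_sq_def mat_vec_def frob_sq_def norm_mult power_mult_distrib)
next
  case False
  with \<open>s \<ge> 1\<close> have "real s \<ge> 2"
    by simp
  define t where "t = real s - frob_sq s B"
  have "0 \<le> t"
    unfolding t_def
    using frob_sq_gram_defect_le[OF adj_contraction] frob_sq_nonneg[of s "gram_defect s B"]
    by linarith
  have "(1 - t) / real s \<le> (1 - t) / 2"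
    using \<open>real s \<ge> 2\<close> frob_large by (intro divide_left_mono) (auto simp: t_def)
  also have "\<dots> \<le> 1 - sqrt t"
    using \<open>0 \<le> t\<close> power2_diff[of 1 "sqrt t"] zero_le_power2[of "1 - sqrt t"] by simp
  finally have "(1 - t) / real s * norm_sq s x \<le> (1 - sqrt t) * norm_sq s x"
    by (rule mult_right_mono) (rule norm_sq_nonneg)
  then show ?thesis
    using norm_sq_mat_vec_ge_sqrt[OF adj_contraction, of x] by (simp add: t_def)
qed

lemma frob_sq_mat_mult_adj_ge:
  assumes "\<And>x. c * norm_sq s x \<le> norm_sq s (mat_vec s B x)"
  shows "c * frob_sq s A \<le> frob_sq s (mat_mult s A (mat_adj B))"
proof -
  have "mat_vec s B (\<lambda>k. cnj (A a k)) = (\<lambda>b. cnj (mat_mult s A (mat_adj B) a b))" for a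
    by (simp add: mat_vec_def mat_mult_def mat_adj_def mult.commute)
  then have rows: "norm_sq s (mat_vec s B (\<lambda>k. cnj (A a k))) = norm_sq s (mat_mult s A (mat_adj B) a)"
    for a by simp
  have "c * frob_sq s A = (\<Sum>a<s. c * norm_sq s (\<lambda>k. cnj (A a k)))"
    by (simp add: frob_sq_eq_sum_rows sum_distrib_left)
  also have "\<dots> \<le> (\<Sum>a<s. norm_sq s (mat_vec s B (\<lambda>k. cnj (A a k))))"
    by (intro sum_mono assms)
  also have "\<dots> = frob_sq s (mat_mult s A (mat_adj B))"
    by (simp add: frob_sq_eq_sum_rows rows)
  finally show ?thesis .
qed

lemma sum_norm_sq_mat_vec_adj:
  assumes coisometry: "\<forall>a<s. \<forall>b<s. mat_sum_prod_adj d s B B a b = (if a = b then 1 else 0)"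
  shows "(\<Sum>j<d. norm_sq s (mat_vec s (mat_adj (B j)) y)) = norm_sq s y"
proof -
  have sum_BBadj: "(\<Sum>j<d. mat_vec s (B j) (mat_vec s (mat_adj (B j)) y) a) = y a" if "a < s" for a
  proof -
    have "(\<Sum>j<d. mat_vec s (B j) (mat_vec s (mat_adj (B j)) y) a)
        = (\<Sum>j<d. \<Sum>b<s. (\<Sum>k<s. B j a k * cnj (B j b k)) * y b)"
      by (simp add: mat_vec_mat_mult[symmetric]) (simp add: mat_vec_def mat_mult_def mat_adj_def)
    also have "\<dots> = (\<Sum>b<s. mat_sum_prod_adj d s B B a b * y b)"
      unfolding mat_sum_prod_adj_def sum_distrib_right by (rule sum.swap)
    also have "\<dots> = y a"
      using coisometry that by (simp add: if_distrib[of "\<lambda>c. c * _"] cong: if_cong)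
    finally show ?thesis .
  qed
  have "complex_of_real (\<Sum>j<d. norm_sq s (mat_vec s (mat_adj (B j)) y))
      = (\<Sum>j<d. cinner s (mat_vec s (B j) (mat_vec s (mat_adj (B j)) y)) y)"
    by (simp add: of_real_norm_sq cinner_mat_vec_adj)
  also have "\<dots> = cinner s (\<lambda>a. \<Sum>j<d. mat_vec s (B j) (mat_vec s (mat_adj (B j)) y) a) y"
    unfolding cinner_def by (simp add: sum_distrib_right) (rule sum.swap)
  also have "\<dots> = complex_of_real (norm_sq s y)"
    by (simp add: cinner_def sum_BBadj of_real_norm_sq)
  finally show ?thesis
    by (simp only: of_real_eq_iff)
qed

lemma sqrt_frob_sq_le_sum_others:
  fixes d :: nat
  assumes "\<forall>a<s. \<forall>b<s. (\<Sum>j<d. P j a b) = 0" and "i < d"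
  shows "sqrt (frob_sq s (P i)) \<le> (\<Sum>j\<in>{..<d} - {i}. sqrt (frob_sq s (P j)))"
proof -
  have split: "(\<Sum>j<d. P j a b) = P i a b + (\<Sum>j\<in>{..<d} - {i}. P j a b)" for a b
    using \<open>i < d\<close> by (intro sum.remove) auto
  have "P i a b = - (\<Sum>j\<in>{..<d} - {i}. P j a b)" if "a < s" "b < s" for a b
    unfolding eq_neg_iff_add_eq_0 using assms(1)[unfolded split] that by blast
  then have "frob_sq s (P i) = frob_sq s (\<lambda>a b. - (\<Sum>j\<in>{..<d} - {i}. P j a b))"
    by (rule frob_sq_cong)
  then have "sqrt (frob_sq s (P i)) = sqrt (frob_sq s (\<lambda>a b. \<Sum>j\<in>{..<d} - {i}. P j a b))"
    by (simp only: frob_sq_uminus)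
  also have "\<dots> \<le> (\<Sum>j\<in>{..<d} - {i}. sqrt (frob_sq s (P j)))"
    by (rule sqrt_frob_sq_sum_le) simp
  finally show ?thesis .
qed

lemma norm_sq_mat_vec_adj_le:
  assumes "\<forall>a<s. \<forall>b<s. mat_sum_prod_adj d s B B a b = (if a = b then 1 else 0)" and "i < d"
  shows "norm_sq s (mat_vec s (mat_adj (B i)) y) \<le> norm_sq s y"
proof -
  have "norm_sq s (mat_vec s (mat_adj (B i)) y) \<le> (\<Sum>j<d. norm_sq s (mat_vec s (mat_adj (B j)) y))"
    using \<open>i < d\<close> by (intro member_le_sum) (simp_all add: norm_sq_nonneg)
  then show ?thesis
    by (simp only: sum_norm_sq_mat_vec_adj[OF assms(1)])
qed

lemma sqrt_frob_sq_mult_adj_le_sum_others: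
  fixes d :: nat
  assumes "\<forall>a<s. \<forall>b<s. mat_sum_prod_adj d s A B a b = 0" and "i < d"
  shows "sqrt (frob_sq s (mat_mult s (A i) (mat_adj (B i))))
           \<le> (\<Sum>j\<in>{..<d} - {i}. sqrt (frob_sq s (A j)) * sqrt (frob_sq s (B j)))"
proof -
  have "sqrt (frob_sq s (mat_mult s (A i) (mat_adj (B i))))
      \<le> (\<Sum>j\<in>{..<d} - {i}. sqrt (frob_sq s (mat_mult s (A j) (mat_adj (B j)))))"
    using assms by (intro sqrt_frob_sq_le_sum_others)
      (simp_all add: mat_sum_prod_adj_def mat_mult_def mat_adj_def)
  also have "\<dots> \<le> (\<Sum>j\<in>{..<d} - {i}. sqrt (frob_sq s (A j)) * sqrt (frob_sq s (B j)))"
    using frob_sq_mat_mult_le[of s "A _" "mat_adj (B _)"]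
    by (intro sum_mono) (simp add: real_sqrt_mult[symmetric])
  finally show ?thesis .
qed

theorem proposition3p7:
  fixes d s :: nat and \<alpha> \<beta> :: "nat \<Rightarrow> real" and i :: nat
  assumes "d \<ge> 2" and "s \<ge> 1"
    and "(\<alpha>, \<beta>) \<in> Brac d s"
    and "i < d"
    and "\<beta> i \<ge> 1 - 1 / real s"
  shows "sqrt (\<alpha> i) * sqrt (real s * \<beta> i - (real s - 1))
           \<le> real s * (\<Sum>j\<in>{..<d} - {i}. sqrt (\<alpha> j * \<beta> j))"
proof -
  obtain A B :: "nat \<Rightarrow> nat \<Rightarrow> nat \<Rightarrow> complex" where
    coisometry: "\<forall>a<s. \<forall>b<s. mat_sum_prod_adj d s B B a b = (if a = b then 1 else 0)"
    and orthogonal: "\<forall>a<s. \<forall>b<s. mat_sum_prod_adj d s A B a b = 0"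
    and weights: "\<forall>j<d. frob_sq s (A j) / real s = \<alpha> j \<and> frob_sq s (B j) / real s = \<beta> j"
    using assms(3) unfolding Brac_def by blast
  define P where "P = mat_mult s (A i) (mat_adj (B i))"
  have frob_A: "frob_sq s (A j) = real s * \<alpha> j" and frob_B: "frob_sq s (B j) = real s * \<beta> j"
    if "j < d" for j
    using weights that \<open>s \<ge> 1\<close> by (simp_all add: nonzero_divide_eq_eq mult.commute)
  have "\<alpha> i * (real s * \<beta> i - (real s - 1))
      = (1 - (real s - frob_sq s (B i))) / real s * frob_sq s (A i)"
    using frob_A frob_B \<open>i < d\<close> \<open>s \<ge> 1\<close> by (simp add: field_simps)
  also have "\<dots> \<le> frob_sq s P"
    unfolding P_def using \<open>s \<ge> 1\<close> coisometry \<open>i < d\<close> assms(5) frob_B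
    by (intro frob_sq_mat_mult_adj_ge norm_sq_mat_vec_ge norm_sq_mat_vec_adj_le)
      (auto simp: field_simps)
  finally have lower: "sqrt (\<alpha> i) * sqrt (real s * \<beta> i - (real s - 1)) \<le> sqrt (frob_sq s P)"
    by (simp add: real_sqrt_mult[symmetric])
  have "sqrt (frob_sq s P) \<le> (\<Sum>j\<in>{..<d} - {i}. sqrt (frob_sq s (A j)) * sqrt (frob_sq s (B j)))"
    unfolding P_def using orthogonal \<open>i < d\<close> by (rule sqrt_frob_sq_mult_adj_le_sum_others)
  also have "\<dots> = real s * (\<Sum>j\<in>{..<d} - {i}. sqrt (\<alpha> j * \<beta> j))"
    unfolding sum_distrib_left
    by (intro sum.cong refl) (simp add: frob_A frob_B real_sqrt_mult)
  finally show ?thesis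
    using lower by linarith
qed

end
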